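(* Let $(G,s,t)$ be a TTSPG and let $L=(G,l)$ for a length function $l:E\to\mathbb R_{\ge0}$. Then $[L,s,t]$ is either empty or a closed bounded interval of $\mathbb R$ (possibly a single point).
   Context: A graph has a finite vertex set and a finite multiset $E$ of edges, each an unordered pair of distinct vertices. A linkage is $L=(G,l)$ with $l:E\to\mathbb R_{\ge0}$; $C(L)=\{p:V\to\mathbb R^2: |p(u)-p(v)|=l(\{u,v\})\ \forall\{u,v\}\in E\}$ and $M(L)$ is its quotient by orientation preserving isometries of $\mathbb R^2$. $[L,s,t]=\{|p(s)-p(t)|:p\in M(L)\}$. A TTG is $(G,s,t)$ with $s\neq t$ vertices of $G$; series composition $(G_1,s_1,t_1)\circ(G_2,s_2,t_2)=(G_1\cup_{t_2\sim s_1}G_2,s_2,t_1)$; parallel composition $(G_1,s_1,t_1)\|(G_2,s_2,t_2)=(G_1\cup_{s_1\sim s_2,t_1\sim t_2}G_2,s_1,t_1)$. TTSPGs form the smallest class of TTGs containing the single edge $(K_2,s,t)$ and closed under series and parallel composition. *)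

theory Defs
  imports "HOL-Analysis.Analysis"
begin

text \<open>A graph with (possibly parallel) edges: vertex set V, edge-label set E,
  and an endpoint map ends; edge e joins fst (ends e) and snd (ends e).
  Orientation of the pair is irrelevant for everything below. This is the paper's inductive class, realised up to isomorphism.\<close>

inductive ttspg :: "('e \<Rightarrow> 'v \<times> 'v) \<Rightarrow> 'v set \<Rightarrow> 'e set \<Rightarrow> 'v \<Rightarrow> 'v \<Rightarrow> bool"
  for ends :: "'e \<Rightarrow> 'v \<times> 'v" where
  edge: "\<lbrakk> s \<noteq> t; ends e = (s, t) \<or> ends e = (t, s) \<rbrakk>
         \<Longrightarrow> ttspg ends {s, t} {e} s t"
| series: "\<lbrakk> ttspg ends V1 E1 m t; ttspg ends V2 E2 s m;
             V1 \<inter> V2 = {m}; E1 \<inter> E2 = {} \<rbrakk>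
         \<Longrightarrow> ttspg ends (V1 \<union> V2) (E1 \<union> E2) s t"
| parallel: "\<lbrakk> ttspg ends V1 E1 s t; ttspg ends V2 E2 s t;
             V1 \<inter> V2 = {s, t}; E1 \<inter> E2 = {} \<rbrakk>
         \<Longrightarrow> ttspg ends (V1 \<union> V2) (E1 \<union> E2) s t"

text \<open>Configuration space C(L): placements of the vertices in the plane
  (identified with complex numbers) respecting all edge lengths.\<close>
definition configs :: "('e \<Rightarrow> 'v \<times> 'v) \<Rightarrow> 'v set \<Rightarrow> 'e set \<Rightarrow> ('e \<Rightarrow> real) \<Rightarrow> ('v \<Rightarrow> complex) set" where
  "configs ends V E l = {p. (\<forall>v. v \<notin> V \<longrightarrow> p v = 0) \<and>
      (\<forall>e\<in>E. dist (p (fst (ends e))) (p (snd (ends e))) = l e)}"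

text \<open>[L,s,t]: the set of realised distances between s and t. Distances are
  invariant under isometries, so taking the quotient M(L) does not change it.\<close>
definition dist_set :: "('e \<Rightarrow> 'v \<times> 'v) \<Rightarrow> 'v set \<Rightarrow> 'e set \<Rightarrow> ('e \<Rightarrow> real) \<Rightarrow> 'v \<Rightarrow> 'v \<Rightarrow> real set" where
  "dist_set ends V E l s t = {dist (p s) (p t) | p. p \<in> configs ends V E l}"

end

theory Submission
  imports Defs
begin

(* By induction over the construction of the two-terminal
   series-parallel graph we show that the distance set [L,s,t] is a compact
   connected subset of the real line; such a set is empty or a closed interval.
   - A single edge e realises exactly the distance l e (or nothing if l e < 0).
   - Parallel composition: since rigid motions of the plane act transitively on
     pairs of points at a given distance, two realisations agreeing on the
     distance between s and t can be glued; hence the distance set is the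
     intersection of the two distance sets, and intersections of compact
     intervals are compact intervals.
   - Series composition at m: after normalising the first part so that m = 0
     and t lies on the positive real axis, the second part can be rotated
     freely about m; hence the distance set is the image of
     [L1,m,t] x [L2,s,m] x S^1 under the continuous map (x,y,w) |-> |x - y w|,
     which is compact and connected. *)

lemma ttspg_wellformed:
  assumes "ttspg ends V E s t"
  shows "s \<noteq> t \<and> s \<in> V \<and> t \<in> V \<and> (\<forall>e\<in>E. fst (ends e) \<in> V \<and> snd (ends e) \<in> V)"
  using assms by (induction rule: ttspg.induct) (force, blast, blast)

lemma rigid_motion_exists:
  fixes a b A B :: complex
  assumes "dist a b = dist A B"
  shows "\<exists>c d. cmod c = 1 \<and> c * a + d = A \<and> c * b + d = B"
proof (cases "a = b")
  case True
  then have "A = B" using assms by simp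
  then show ?thesis using True by (intro exI[of _ 1] exI[of _ "A - a"]) auto
next
  case False
  define c where "c = (B - A) / (b - a)"
  have "cmod (B - A) = cmod (b - a)"
    using assms by (simp add: dist_norm norm_minus_commute)
  then have "cmod c = 1" using False by (simp add: c_def norm_divide)
  moreover have "c * (b - a) = B - A"
    using False by (simp add: c_def)
  then have "c * b + (A - c * a) = B" by (simp add: algebra_simps)
  ultimately show ?thesis by (intro exI[of _ c] exI[of _ "A - c * a"]) auto
qed

lemma dist_rigid_motion:
  fixes c d x y :: complex
  assumes "cmod c = 1"
  shows "dist (c * x + d) (c * y + d) = dist x y"
proof -
  have "dist (c * x + d) (c * y + d) = cmod (c * (x - y))"
    by (simp add: dist_norm algebra_simps)
  also have "\<dots> = dist x y" using assms by (simp add: norm_mult dist_norm)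
  finally show ?thesis .
qed

lemma configs_rigid_motion:
  assumes "p \<in> configs ends V E l" "cmod c = 1"
    and "\<forall>e\<in>E. fst (ends e) \<in> V \<and> snd (ends e) \<in> V"
  shows "(\<lambda>v. if v \<in> V then c * p v + d else 0) \<in> configs ends V E l"
  using assms dist_rigid_motion[where d = 0] by (auto simp: configs_def dist_rigid_motion)

lemma configs_restrict:
  assumes "p \<in> configs ends V E l" "E1 \<subseteq> E"
    and "\<forall>e\<in>E1. fst (ends e) \<in> V1 \<and> snd (ends e) \<in> V1"
  shows "(\<lambda>v. if v \<in> V1 then p v else 0) \<in> configs ends V1 E1 l"
  using assms by (auto simp: configs_def)

lemma configs_glue:
  assumes p1: "p1 \<in> configs ends V1 E1 l" and p2: "p2 \<in> configs ends V2 E2 l"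
    and agree: "\<forall>v\<in>V1 \<inter> V2. p1 v = p2 v"
    and E1: "\<forall>e\<in>E1. fst (ends e) \<in> V1 \<and> snd (ends e) \<in> V1"
    and E2: "\<forall>e\<in>E2. fst (ends e) \<in> V2 \<and> snd (ends e) \<in> V2"
  shows "(\<lambda>v. if v \<in> V1 then p1 v else p2 v) \<in> configs ends (V1 \<union> V2) (E1 \<union> E2) l"
proof -
  define q where "q = (\<lambda>v. if v \<in> V1 then p1 v else p2 v)"
  have q2: "q v = p2 v" if "v \<in> V2" for v
    using agree that by (auto simp: q_def)
  have "dist (q (fst (ends e))) (q (snd (ends e))) = l e" if "e \<in> E1 \<union> E2" for e
  proof (cases "e \<in> E1")
    case True
    then show ?thesis using p1 E1 by (auto simp: configs_def q_def)
  next
    case False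
    then have "e \<in> E2" using that by blast
    then show ?thesis using p2 E2 q2 by (auto simp: configs_def)
  qed
  moreover have "q v = 0" if "v \<notin> V1 \<union> V2" for v
    using that p2 by (auto simp: configs_def q_def)
  ultimately show ?thesis unfolding configs_def q_def by blast
qed

lemma dist_setI:
  assumes "q \<in> configs ends V E l" "dist (q a) (q b) = x"
  shows "x \<in> dist_set ends V E l a b"
  using assms unfolding dist_set_def by blast

lemma dist_set_edge:
  assumes "s \<noteq> t" and ends: "ends e = (s, t) \<or> ends e = (t, s)"
  shows "dist_set ends {s, t} {e} l s t = {l e} \<inter> {0..}"
proof
  show "dist_set ends {s, t} {e} l s t \<subseteq> {l e} \<inter> {0..}"
    using ends by (auto simp: dist_set_def configs_def dist_commute) (metis zero_le_dist)+
  show "{l e} \<inter> {0..} \<subseteq> dist_set ends {s, t} {e} l s t"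
  proof clarify
    assume "0 \<le> l e"
    define p where "p = (\<lambda>v. if v = t then complex_of_real (l e) else 0)"
    have "dist (p (fst (ends e))) (p (snd (ends e))) = l e"
      using ends
    proof
      assume "ends e = (s, t)"
      then show ?thesis using \<open>s \<noteq> t\<close> \<open>0 \<le> l e\<close> by (simp add: p_def)
    next
      assume "ends e = (t, s)"
      then show ?thesis using \<open>s \<noteq> t\<close> \<open>0 \<le> l e\<close> by (simp add: p_def)
    qed
    then have "p \<in> configs ends {s, t} {e} l" by (auto simp: configs_def p_def)
    moreover have "dist (p s) (p t) = l e" using \<open>s \<noteq> t\<close> \<open>0 \<le> l e\<close> by (simp add: p_def)
    ultimately show "l e \<in> dist_set ends {s, t} {e} l s t" by (rule dist_setI)
  qed
qed

text \<open>The distance between the ends of a path of two segments of lengths x and y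
  meeting at the angle encoded by the unit complex number w.\<close>
definition two_link_dist :: "real \<times> real \<times> complex \<Rightarrow> real" where
  "two_link_dist z = cmod (complex_of_real (fst z) - complex_of_real (fst (snd z)) * snd (snd z))"

text \<open>Series composition: the second part may be rotated freely about the
  cut vertex m, so all angles between the two parts occur.\<close>
lemma dist_set_series:
  assumes E1: "\<forall>e\<in>E1. fst (ends e) \<in> V1 \<and> snd (ends e) \<in> V1"
    and E2: "\<forall>e\<in>E2. fst (ends e) \<in> V2 \<and> snd (ends e) \<in> V2"
    and V1: "m \<in> V1" "t \<in> V1" and V2: "s \<in> V2" "m \<in> V2"
    and cut: "V1 \<inter> V2 = {m}" and "s \<noteq> m"
  shows "dist_set ends (V1 \<union> V2) (E1 \<union> E2) l s t =
    two_link_dist ` (dist_set ends V1 E1 l m t \<times> dist_set ends V2 E2 l s m \<times> sphere 0 1)"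
    (is "?D = two_link_dist ` ?P")
proof
  show "?D \<subseteq> two_link_dist ` ?P"
  proof
    fix r assume "r \<in> ?D"
    then obtain p where p: "p \<in> configs ends (V1 \<union> V2) (E1 \<union> E2) l" and r: "r = dist (p s) (p t)"
      unfolding dist_set_def by auto
    define x where "x = dist (p m) (p t)"
    define y where "y = dist (p s) (p m)"
    have x: "x \<in> dist_set ends V1 E1 l m t"
      by (rule dist_setI[OF configs_restrict[OF p _ E1]]) (auto simp: x_def V1)
    have y: "y \<in> dist_set ends V2 E2 l s m"
      by (rule dist_setI[OF configs_restrict[OF p _ E2]]) (auto simp: y_def V2)
    text \<open>Move m to the origin and t onto the positive real axis.\<close>
    obtain c d where c: "cmod c = 1" and cm: "c * p m + d = 0" and ct: "c * p t + d = x"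
      using rigid_motion_exists[of "p m" "p t" 0 "complex_of_real x"] by (auto simp: x_def)
    define z where "z = c * p s + d"
    have z: "cmod z = y"
      using dist_rigid_motion[OF c, of "p s" d "p m"] cm by (simp add: z_def y_def dist_norm)
    define w where "w = (if y = 0 then 1 else z / complex_of_real y)"
    have w: "w \<in> sphere 0 1" and zw: "z = complex_of_real y * w"
      using z by (auto simp: w_def norm_divide)
    have "r = dist z (complex_of_real x)"
      using dist_rigid_motion[OF c, of "p s" d "p t"] ct by (simp add: r z_def)
    also have "\<dots> = two_link_dist (x, y, w)"
      by (simp add: two_link_dist_def zw dist_norm norm_minus_commute)
    finally show "r \<in> two_link_dist ` ?P" using x y w by blast
  qed
  show "two_link_dist ` ?P \<subseteq> ?D"
  proof clarify
    fix x y and w :: complex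
    assume x: "x \<in> dist_set ends V1 E1 l m t" and y: "y \<in> dist_set ends V2 E2 l s m"
      and w: "w \<in> sphere 0 1"
    obtain p1 where p1: "p1 \<in> configs ends V1 E1 l" and x_eq: "x = dist (p1 m) (p1 t)"
      using x unfolding dist_set_def by auto
    obtain p2 where p2: "p2 \<in> configs ends V2 E2 l" and y_eq: "y = dist (p2 s) (p2 m)"
      using y unfolding dist_set_def by auto
    text \<open>Normalise both parts so that m sits at the origin, t at x and s at y w.\<close>
    obtain c1 d1 where c1: "cmod c1 = 1" and c1m: "c1 * p1 m + d1 = 0"
      and c1t: "c1 * p1 t + d1 = complex_of_real x"
      using rigid_motion_exists[of "p1 m" "p1 t" 0 "complex_of_real x"] by (auto simp: x_eq)
    have "dist (p2 m) (p2 s) = dist 0 (complex_of_real y * w)"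
      using w by (simp add: y_eq norm_mult dist_commute)
    then obtain c2 d2 where c2: "cmod c2 = 1" and c2m: "c2 * p2 m + d2 = 0"
      and c2s: "c2 * p2 s + d2 = complex_of_real y * w"
      using rigid_motion_exists by blast
    define q1 where "q1 = (\<lambda>v. if v \<in> V1 then c1 * p1 v + d1 else 0)"
    define q2 where "q2 = (\<lambda>v. if v \<in> V2 then c2 * p2 v + d2 else 0)"
    have "\<forall>v\<in>V1 \<inter> V2. q1 v = q2 v" using cut V1 V2 c1m c2m by (auto simp: q1_def q2_def)
    then have q: "(\<lambda>v. if v \<in> V1 then q1 v else q2 v) \<in> configs ends (V1 \<union> V2) (E1 \<union> E2) l"
      using configs_glue configs_rigid_motion[OF p1 c1 E1] configs_rigid_motion[OF p2 c2 E2] E1 E2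
      unfolding q1_def q2_def by blast
    have "s \<notin> V1" using cut V2 \<open>s \<noteq> m\<close> by auto
    then show "two_link_dist (x, y, w) \<in> ?D"
      using V1 V2 c2s c1t
      by (intro dist_setI[OF q]) (simp add: q1_def q2_def two_link_dist_def dist_norm norm_minus_commute)
  qed
qed

text \<open>Parallel composition: a realisation of the union is exactly a pair of
  realisations agreeing on the terminal distance.\<close>
lemma dist_set_parallel:
  assumes E1: "\<forall>e\<in>E1. fst (ends e) \<in> V1 \<and> snd (ends e) \<in> V1"
    and E2: "\<forall>e\<in>E2. fst (ends e) \<in> V2 \<and> snd (ends e) \<in> V2"
    and V1: "s \<in> V1" "t \<in> V1" and V2: "s \<in> V2" "t \<in> V2"
    and shared: "V1 \<inter> V2 = {s, t}"
  shows "dist_set ends (V1 \<union> V2) (E1 \<union> E2) l s t =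
    dist_set ends V1 E1 l s t \<inter> dist_set ends V2 E2 l s t"
proof
  show "dist_set ends (V1 \<union> V2) (E1 \<union> E2) l s t \<subseteq>
    dist_set ends V1 E1 l s t \<inter> dist_set ends V2 E2 l s t"
  proof
    fix r assume "r \<in> dist_set ends (V1 \<union> V2) (E1 \<union> E2) l s t"
    then obtain p where p: "p \<in> configs ends (V1 \<union> V2) (E1 \<union> E2) l" and r: "r = dist (p s) (p t)"
      unfolding dist_set_def by auto
    show "r \<in> dist_set ends V1 E1 l s t \<inter> dist_set ends V2 E2 l s t"
      using dist_setI[OF configs_restrict[OF p _ E1], of s t r]
        dist_setI[OF configs_restrict[OF p _ E2], of s t r] V1 V2 r by simp
  qed
  show "dist_set ends V1 E1 l s t \<inter> dist_set ends V2 E2 l s t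
    \<subseteq> dist_set ends (V1 \<union> V2) (E1 \<union> E2) l s t"
  proof
    fix r assume "r \<in> dist_set ends V1 E1 l s t \<inter> dist_set ends V2 E2 l s t"
    then obtain p1 p2 where p1: "p1 \<in> configs ends V1 E1 l" and r1: "r = dist (p1 s) (p1 t)"
      and p2: "p2 \<in> configs ends V2 E2 l" and r2: "r = dist (p2 s) (p2 t)"
      unfolding dist_set_def by auto
    text \<open>Move the second realisation so that its terminals coincide with the first's.\<close>
    obtain c d where c: "cmod c = 1" and cs: "c * p2 s + d = p1 s" and ct: "c * p2 t + d = p1 t"
      using rigid_motion_exists[of "p2 s" "p2 t" "p1 s" "p1 t"] r1 r2 by auto
    define q2 where "q2 = (\<lambda>v. if v \<in> V2 then c * p2 v + d else 0)"
    have "\<forall>v\<in>V1 \<inter> V2. p1 v = q2 v" using shared V2 cs ct by (auto simp: q2_def)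
    then have q: "(\<lambda>v. if v \<in> V1 then p1 v else q2 v) \<in> configs ends (V1 \<union> V2) (E1 \<union> E2) l"
      using configs_glue[OF p1 configs_rigid_motion[OF p2 c E2] _ E1 E2] unfolding q2_def by blast
    show "r \<in> dist_set ends (V1 \<union> V2) (E1 \<union> E2) l s t"
      by (rule dist_setI[OF q]) (simp add: V1 r1)
  qed
qed

lemma compact_connected_real_interval:
  fixes S :: "real set"
  assumes "compact S" "connected S"
  shows "S = {} \<or> (\<exists>a b. a \<le> b \<and> S = {a..b})"
proof -
  obtain a b where "S = {a..b}" using assms connected_compact_interval_1 by blast
  then show ?thesis by (cases "a \<le> b") auto
qed

lemma compact_connected_real_Int:
  fixes A B :: "real set"
  assumes "compact A" "connected A" "compact B" "connected B"
  shows "compact (A \<inter> B) \<and> connected (A \<inter> B)"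
proof -
  obtain a1 b1 a2 b2 where "A = {a1..b1}" "B = {a2..b2}"
    using assms connected_compact_interval_1 by metis
  then show ?thesis by (simp add: Int_atLeastAtMost)
qed

lemma compact_connected_two_link_image:
  fixes A B :: "real set"
  assumes "compact A" "connected A" "compact B" "connected B"
  shows "compact (two_link_dist ` (A \<times> B \<times> sphere 0 1)) \<and>
         connected (two_link_dist ` (A \<times> B \<times> sphere 0 1))"
proof -
  have "continuous_on (A \<times> B \<times> sphere 0 1) two_link_dist"
    unfolding two_link_dist_def by (intro continuous_intros)
  moreover have "compact (A \<times> B \<times> sphere (0::complex) 1)"
    using assms by (intro compact_Times compact_sphere)
  moreover have "connected (A \<times> B \<times> sphere (0::complex) 1)"
    using assms by (intro connected_Times connected_sphere) auto
  ultimately show ?thesis using compact_continuous_image connected_continuous_image by blast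
qed

lemma ttspg_dist_set_compact_connected:
  assumes "ttspg ends V E s t"
  shows "compact (dist_set ends V E l s t) \<and> connected (dist_set ends V E l s t)"
  using assms
proof (induction rule: ttspg.induct)
  case (edge s t e)
  then show ?case by (cases "0 \<le> l e") (simp_all add: dist_set_edge)
next
  case (series V1 E1 m t V2 E2 s)
  have "dist_set ends (V1 \<union> V2) (E1 \<union> E2) l s t =
    two_link_dist ` (dist_set ends V1 E1 l m t \<times> dist_set ends V2 E2 l s m \<times> sphere 0 1)"
    using ttspg_wellformed[OF series(1)] ttspg_wellformed[OF series(2)] series.hyps(3)
    by (intro dist_set_series) auto
  then show ?case using compact_connected_two_link_image series.IH by simp
next
  case (parallel V1 E1 s t V2 E2)
  have "dist_set ends (V1 \<union> V2) (E1 \<union> E2) l s t =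
    dist_set ends V1 E1 l s t \<inter> dist_set ends V2 E2 l s t"
    using ttspg_wellformed[OF parallel(1)] ttspg_wellformed[OF parallel(2)] parallel.hyps(3)
    by (intro dist_set_parallel) auto
  then show ?case using compact_connected_real_Int parallel.IH by simp
qed

theorem mainTheorem4:
  fixes ends :: "'e \<Rightarrow> 'v \<times> 'v" and V :: "'v set" and E :: "'e set"
    and l :: "'e \<Rightarrow> real" and s t :: 'v
  assumes "ttspg ends V E s t"
    and "\<forall>e\<in>E. l e \<ge> 0"
  shows "dist_set ends V E l s t = {} \<or>
         (\<exists>a b. a \<le> b \<and> dist_set ends V E l s t = {a..b})"
  using ttspg_dist_set_compact_connected[OF assms(1)] compact_connected_real_interval by blast

end
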